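(* Let $S$ be a finite poset containing a subposet (with induced order) isomorphic to $W^{2k}$ for some $k\ge2$, and suppose $f_S$ is positive semidefinite. Then $C(f_S)\ne\varnothing$.
   Context: $f_S(x)=\sum_i x_i^2+\sum_{s_i<s_j}x_ix_j$. $H_n=\{x:\sum x_i=0\}$; $C(f)$ is the set of $h\in H_n\setminus\{0\}$ with either all $\partial f/\partial x_i(h)\le0$ or all $\ge0$. $W^{2k}=\{s_1^-,\dots,s_k^-,s_1^+,\dots,s_k^+\}$ whose only strict relations are $s_i^-<s_i^+$ ($1\le i\le k$), $s_i^-<s_{i+1}^+$ ($1\le i\le k-1$), $s_k^-<s_1^+$. *)

theory Defs
  imports "HOL-Analysis.Analysis"
begin

definition fS :: "('a::{order,finite} \<Rightarrow> real) \<Rightarrow> real" where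
  "fS x = (\<Sum>i\<in>UNIV. (x i)^2) + (\<Sum>i\<in>UNIV. \<Sum>j\<in>{j. i < j}. x i * x j)"

definition partial_deriv :: "(('a \<Rightarrow> real) \<Rightarrow> real) \<Rightarrow> 'a \<Rightarrow> ('a \<Rightarrow> real) \<Rightarrow> real" where
  "partial_deriv f i x = deriv (\<lambda>t. f (x(i := t))) (x i)"

definition psd :: "(('a \<Rightarrow> real) \<Rightarrow> real) \<Rightarrow> bool" where
  "psd f \<longleftrightarrow> (\<forall>x. f x \<ge> 0)"

definition Cset :: "(('a::finite \<Rightarrow> real) \<Rightarrow> real) \<Rightarrow> ('a \<Rightarrow> real) set" where
  "Cset f = {h. (\<Sum>i\<in>UNIV. h i) = 0 \<and> h \<noteq> (\<lambda>_. 0) \<and>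
      ((\<forall>i. partial_deriv f i h \<le> 0) \<or> (\<forall>i. partial_deriv f i h \<ge> 0))}"

text \<open>The poset W^{2k}: elements (False, i) = s_i^-, (True, i) = s_i^+ for 1 \<le> i \<le> k.
  Strict order: s_i^- < s_i^+, s_i^- < s_{i+1}^+ (i < k), s_k^- < s_1^+.\<close>
definition W_elems :: "nat \<Rightarrow> (bool \<times> nat) set" where
  "W_elems k = UNIV \<times> {1..k}"

definition W_less :: "nat \<Rightarrow> bool \<times> nat \<Rightarrow> bool \<times> nat \<Rightarrow> bool" where
  "W_less k p q \<longleftrightarrow> p \<in> W_elems k \<and> q \<in> W_elems k \<and> \<not> fst p \<and> fst q \<and>
     (snd q = snd p \<or> (snd p < k \<and> snd q = snd p + 1) \<or> (snd p = k \<and> snd q = 1))"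

definition contains_W :: "nat \<Rightarrow> 'a::order itself \<Rightarrow> bool" where
  "contains_W k _ \<longleftrightarrow> (\<exists>m :: bool \<times> nat \<Rightarrow> 'a. inj_on m (W_elems k) \<and>
     (\<forall>p\<in>W_elems k. \<forall>q\<in>W_elems k. m p < m q \<longleftrightarrow> W_less k p q))"

end

theory Submission
  imports Defs
begin

text \<open>Put +1 on the elements s_i^- and -1 on the elements s_i^+ of the copy of W^{2k}
  in S, and 0 elsewhere. This vector h lies in H_n and is nonzero, and since every s_i^- lies
  below exactly two of the s_j^+, f_S(h) = 2k - 2k = 0. As f_S is positive semidefinite,
  h is a global minimum of f_S, so all partial derivatives of f_S vanish at h and h \<in> C(f_S).\<close>

lemma partial_deriv_eq_0_at_psd_root:
  fixes f :: "('a \<Rightarrow> real) \<Rightarrow> real"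
  assumes "psd f" and "f h = 0"
    and "(\<lambda>t. f (h(i := t))) differentiable (at (h i))"
  shows "partial_deriv f i h = 0"
proof -
  obtain D where D: "((\<lambda>t. f (h(i := t))) has_real_derivative D) (at (h i))"
    using assms(3) real_differentiable_def by blast
  have "D = 0"
  proof (rule DERIV_local_min[OF D, of 1])
    show "\<forall>y. \<bar>h i - y\<bar> < 1 \<longrightarrow> f (h(i := h i)) \<le> f (h(i := y))"
      using assms(1,2) unfolding psd_def by simp
  qed simp
  then show ?thesis
    unfolding partial_deriv_def using DERIV_imp_deriv[OF D] by simp
qed

lemma fS_differentiable_along_coordinate:
  "(\<lambda>t. fS ((h::'a::{order,finite} \<Rightarrow> real)(i := t))) differentiable (at x)"
proof -
  have "(\<lambda>t::real. if P then t else c) differentiable (at x)" for P and c :: real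
    by (cases P) auto
  then show ?thesis
    unfolding fS_def fun_upd_def
    by (intro differentiable_sum differentiable_add differentiable_mult differentiable_power ballI finite)
qed

lemma psd_fS_root_in_Cset:
  fixes h :: "'a::{order,finite} \<Rightarrow> real"
  assumes "psd (fS :: ('a \<Rightarrow> real) \<Rightarrow> real)" and "fS h = 0"
    and "(\<Sum>x\<in>UNIV. h x) = 0" and "h \<noteq> (\<lambda>_. 0)"
  shows "h \<in> Cset fS"
  using assms partial_deriv_eq_0_at_psd_root[OF assms(1,2) fS_differentiable_along_coordinate]
  unfolding Cset_def by simp

definition zero_extension :: "('b \<Rightarrow> 'a) \<Rightarrow> 'b set \<Rightarrow> ('b \<Rightarrow> real) \<Rightarrow> 'a \<Rightarrow> real" where
  "zero_extension m W v x = (if x \<in> m ` W then v (inv_into W m x) else 0)"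

lemma zero_extension_apply [simp]:
  "inj_on m W \<Longrightarrow> p \<in> W \<Longrightarrow> zero_extension m W v (m p) = v p"
  unfolding zero_extension_def by simp

lemma zero_extension_outside [simp]:
  "x \<notin> m ` W \<Longrightarrow> zero_extension m W v x = 0"
  unfolding zero_extension_def by simp

lemma sum_UNIV_supported_on_image:
  fixes g :: "'a::finite \<Rightarrow> real"
  assumes "inj_on m W" and "\<And>x. x \<notin> m ` W \<Longrightarrow> g x = 0"
  shows "(\<Sum>x\<in>UNIV. g x) = (\<Sum>p\<in>W. g (m p))"
proof -
  have "(\<Sum>x\<in>UNIV. g x) = (\<Sum>x\<in>m ` W. g x)"
    by (rule sum.mono_neutral_right) (use assms in auto)
  also have "\<dots> = (\<Sum>p\<in>W. g (m p))"
    by (rule sum.reindex_cong[OF assms(1)]) auto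
  finally show ?thesis .
qed

lemma fS_zero_extension:
  fixes m :: "'b \<Rightarrow> 'a::{order,finite}"
  assumes "inj_on m W"
  shows "fS (zero_extension m W v) =
    (\<Sum>p\<in>W. (v p)^2) + (\<Sum>p\<in>W. \<Sum>q\<in>W. if m p < m q then v p * v q else 0)"
proof -
  let ?h = "zero_extension m W v"
  have squares: "(\<Sum>x\<in>UNIV. (?h x)^2) = (\<Sum>p\<in>W. (v p)^2)"
    using assms by (subst sum_UNIV_supported_on_image[OF assms]) auto
  have "(\<Sum>x\<in>UNIV. \<Sum>y\<in>{y. x < y}. ?h x * ?h y)
      = (\<Sum>x\<in>UNIV. \<Sum>y\<in>UNIV. if x < y then ?h x * ?h y else 0)"
    by (rule sum.cong[OF refl], subst sum.inter_filter[symmetric]) auto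
  also have "\<dots> = (\<Sum>p\<in>W. \<Sum>y\<in>UNIV. if m p < y then ?h (m p) * ?h y else 0)"
    by (rule sum_UNIV_supported_on_image[OF assms]) (simp add: sum.neutral)
  also have "\<dots> = (\<Sum>p\<in>W. \<Sum>q\<in>W. if m p < m q then v p * v q else 0)"
    using assms
    by (intro sum.cong refl, subst sum_UNIV_supported_on_image[OF assms]) (auto intro!: sum.cong)
  finally show ?thesis
    unfolding fS_def squares by simp
qed

lemma sum_W_elems:
  "(\<Sum>p\<in>W_elems k. F p) = (\<Sum>i\<in>{1..k}. F (False, i) + F (True, i))"
proof -
  have "(\<Sum>p\<in>W_elems k. F p) = (\<Sum>b\<in>UNIV. \<Sum>i\<in>{1..k}. F (b, i))"
    unfolding W_elems_def by (simp add: sum.cartesian_product)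
  then show ?thesis
    by (simp add: UNIV_bool sum.distrib)
qed

lemma card_W_upper_covers:
  assumes "k \<ge> 2" and "i \<in> {1..k}"
  shows "card {j\<in>{1..k}. W_less k (False, i) (True, j)} = 2"
proof -
  have "{j\<in>{1..k}. W_less k (False, i) (True, j)} = {i, if i < k then i + 1 else 1}"
    using assms by (auto simp: W_less_def W_elems_def)
  then show ?thesis
    using assms by simp
qed

definition W_sign :: "bool \<times> nat \<Rightarrow> real" where
  "W_sign p = (if fst p then -1 else 1)"

lemma sum_W_sign: "(\<Sum>p\<in>W_elems k. W_sign p) = 0"
  by (simp add: sum_W_elems W_sign_def)

lemma sum_W_sign_squares: "(\<Sum>p\<in>W_elems k. (W_sign p)^2) = 2 * real k"
  by (simp add: sum_W_elems W_sign_def)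

lemma sum_W_less_W_sign:
  assumes "k \<ge> 2"
  shows "(\<Sum>p\<in>W_elems k. \<Sum>q\<in>W_elems k. if W_less k p q then W_sign p * W_sign q else 0)
    = - 2 * real k"
proof -
  have "(\<Sum>p\<in>W_elems k. \<Sum>q\<in>W_elems k. if W_less k p q then W_sign p * W_sign q else 0)
      = (\<Sum>i\<in>{1..k}. \<Sum>j\<in>{1..k}. if W_less k (False, i) (True, j) then -1 else 0)"
    unfolding sum_W_elems
    by (intro sum.cong refl) (auto simp: W_less_def W_sign_def intro!: sum.cong)
  also have "\<dots> = (\<Sum>i\<in>{1..k}. - real (card {j\<in>{1..k}. W_less k (False, i) (True, j)}))"
    by (intro sum.cong refl) (simp add: sum.If_cases Int_def)
  also have "\<dots> = - 2 * real k"
    using card_W_upper_covers[OF assms] by simp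
  finally show ?thesis .
qed

theorem lemma10:
  fixes k :: nat
  assumes "k \<ge> 2"
    and "contains_W k TYPE('a::{order,finite})"
    and "psd (fS :: ('a \<Rightarrow> real) \<Rightarrow> real)"
  shows "Cset (fS :: ('a \<Rightarrow> real) \<Rightarrow> real) \<noteq> {}"
proof -
  obtain m :: "bool \<times> nat \<Rightarrow> 'a" where inj: "inj_on m (W_elems k)"
    and ord: "\<forall>p\<in>W_elems k. \<forall>q\<in>W_elems k. m p < m q \<longleftrightarrow> W_less k p q"
    using assms(2) unfolding contains_W_def by blast
  define h where "h = zero_extension m (W_elems k) W_sign"
  have "fS h = 0"
    unfolding h_def fS_zero_extension[OF inj] sum_W_sign_squares
    using ord sum_W_less_W_sign[OF assms(1)] by (simp cong: sum.cong)
  moreover have "(\<Sum>x\<in>UNIV. h x) = 0"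
    unfolding h_def using inj sum_W_sign by (subst sum_UNIV_supported_on_image[OF inj]) auto
  moreover have "h (m (False, 1)) = 1"
    using inj assms(1) by (simp add: h_def W_elems_def W_sign_def)
  then have "h \<noteq> (\<lambda>_. 0)"
    by auto
  ultimately have "h \<in> Cset fS"
    using psd_fS_root_in_Cset[OF assms(3)] by blast
  then show ?thesis
    by blast
qed

end
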